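(* Let $S$ be a set of places of $\mathbb{Q}$ and let $X$ be the set of places of $\overline{\mathbb{Q}}$ dividing a place in $S$. If $f\in LC_c(X)$, then there exists a number field $K$ such that $f$ is constant on $Y(K,v)$ for every $v\in M_K(S)$. Moreover, that constant value is $0$ for all but finitely many $v\in M_K(S)$.
   Context: Fix an algebraic closure $\overline{\mathbb{Q}}$ of $\mathbb{Q}$; number fields are finite extensions of $\mathbb{Q}$ inside $\overline{\mathbb{Q}}$. Let $Y$ be the set of all places of $\overline{\mathbb{Q}}$. For a number field $K$ and a place $v$ of $K$, put $Y(K,v)=\{y\in Y: y\mid v\}$. $Y$ carries the topology having $\{Y(K,v): [K:\mathbb{Q}]<\infty,\ v \text{ a place of } K\}$ as a basis (it is locally compact, totally disconnected and Hausdorff), and $X\subseteq Y$ carries the subspace topology. For a number field $K$, $M_K(S)$ denotes the set of places of $K$ dividing a place in $S$. $LC_c(X)$ denotes the set of locally constant functions $X\to\mathbb{R}$ with compact support. *)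

theory Defs
  imports "HOL-Analysis.Analysis" "HOL-Computational_Algebra.Polynomial"
begin

definition Qbar :: "complex set" where
  "Qbar = {z. algebraic z}"

definition number_field :: "complex set \<Rightarrow> bool" where
  "number_field K \<longleftrightarrow> K \<subseteq> Qbar \<and> \<rat> \<subseteq> K \<and>
     (\<forall>x\<in>K. \<forall>y\<in>K. x + y \<in> K \<and> x - y \<in> K \<and> x * y \<in> K) \<and>
     (\<forall>x\<in>K. x \<noteq> 0 \<longrightarrow> inverse x \<in> K) \<and>
     (\<exists>B. finite B \<and> B \<subseteq> K \<and>
        K \<subseteq> {\<Sum>b\<in>B. c b * b | c. \<forall>b\<in>B. c b \<in> \<rat>})"

definition absval :: "complex set \<Rightarrow> (complex \<Rightarrow> real) \<Rightarrow> bool" where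
  "absval A \<phi> \<longleftrightarrow> (\<forall>x. x \<notin> A \<longrightarrow> \<phi> x = 0) \<and>
     (\<forall>x\<in>A. \<phi> x \<ge> 0 \<and> (\<phi> x = 0 \<longleftrightarrow> x = 0)) \<and>
     (\<forall>x\<in>A. \<forall>y\<in>A. \<phi> (x * y) = \<phi> x * \<phi> y \<and> \<phi> (x + y) \<le> \<phi> x + \<phi> y)"

definition nontrivial_absval :: "complex set \<Rightarrow> (complex \<Rightarrow> real) \<Rightarrow> bool" where
  "nontrivial_absval A \<phi> \<longleftrightarrow> absval A \<phi> \<and> (\<exists>x\<in>A. x \<noteq> 0 \<and> \<phi> x \<noteq> 1)"

definition abs_class :: "complex set \<Rightarrow> (complex \<Rightarrow> real) \<Rightarrow> (complex \<Rightarrow> real) set" where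
  "abs_class A \<phi> = {\<psi>. absval A \<psi> \<and> (\<exists>c>0. \<forall>x\<in>A. \<psi> x = \<phi> x powr c)}"

definition places :: "complex set \<Rightarrow> (complex \<Rightarrow> real) set set" where
  "places A = {abs_class A \<phi> | \<phi>. nontrivial_absval A \<phi>}"

definition restr :: "complex set \<Rightarrow> (complex \<Rightarrow> real) \<Rightarrow> (complex \<Rightarrow> real)" where
  "restr B \<phi> = (\<lambda>x. if x \<in> B then \<phi> x else 0)"

definition place_divides :: "complex set \<Rightarrow> (complex \<Rightarrow> real) set \<Rightarrow> (complex \<Rightarrow> real) set \<Rightarrow> bool" where
  "place_divides B w v \<longleftrightarrow> (\<exists>\<phi>\<in>w. restr B \<phi> \<in> v)"

abbreviation Y :: "(complex \<Rightarrow> real) set set" where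
  "Y \<equiv> places Qbar"

definition YKv :: "complex set \<Rightarrow> (complex \<Rightarrow> real) set \<Rightarrow> (complex \<Rightarrow> real) set set" where
  "YKv K v = {y \<in> Y. place_divides K y v}"

definition Ytop :: "(complex \<Rightarrow> real) set topology" where
  "Ytop = topology_generated_by {YKv K v | K v. number_field K \<and> v \<in> places K}"

definition MK :: "complex set \<Rightarrow> (complex \<Rightarrow> real) set set \<Rightarrow> (complex \<Rightarrow> real) set set" where
  "MK K S = {v \<in> places K. \<exists>s\<in>S. place_divides \<rat> v s}"

definition Xover :: "(complex \<Rightarrow> real) set set \<Rightarrow> (complex \<Rightarrow> real) set set" where
  "Xover S = {y \<in> Y. \<exists>s\<in>S. place_divides \<rat> y s}"

definition LCc :: "(complex \<Rightarrow> real) set set \<Rightarrow> ((complex \<Rightarrow> real) set \<Rightarrow> real) set" where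
  "LCc X = {f. (\<forall>x\<in>X. \<exists>U. openin (subtopology Ytop X) U \<and> x \<in> U \<and> (\<forall>y\<in>U. f y = f x)) \<and>
              compactin (subtopology Ytop X) ((subtopology Ytop X) closure_of {x\<in>X. f x \<noteq> 0})}"

end

theory Submission
  imports Defs
begin

text \<open>
  The sets \<open>Y(K,v)\<close> form a neighbourhood basis: two of them containing a point \<open>y\<close> both
  contain \<open>Y(L,w)\<close>, where \<open>L\<close> is a compositum and \<open>w\<close> the place of \<open>L\<close> below \<open>y\<close>
  (a finite-dimensional \<open>\<rat>\<close>-subalgebra of \<open>\<complex>\<close> is a field, so composita exist).
  Hence a locally constant \<open>f\<close> is constant on some \<open>Y(K\<^sub>x,v\<^sub>x)\<close> around every point \<open>x\<close>
  of the closure of its support; by compactness finitely many of them suffice, and over a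
  common field \<open>K\<close> each \<open>Y(K,v)\<close> meeting that closure lies inside one of them.
  Finally the \<open>Y(K,v)\<close>, \<open>v \<in> M\<^sub>K(S)\<close>, are pairwise disjoint open sets covering \<open>X\<close>,
  so by compactness only finitely many of them meet the support.
\<close>

section \<open>Number fields as finite-dimensional \<open>\<rat>\<close>-subalgebras\<close>

definition rat_scale :: "rat \<Rightarrow> complex \<Rightarrow> complex" where
  "rat_scale q z = of_rat q * z"

interpretation Q: vector_space rat_scale
  by unfold_locales (auto simp: rat_scale_def algebra_simps of_rat_add of_rat_mult)

lemma rat_combinations_eq_span:
  assumes "finite B"
  shows "{\<Sum>b\<in>B. c b * b | c. \<forall>b\<in>B. c b \<in> \<rat>} = Q.span B"
proof -
  have "(\<exists>c. x = (\<Sum>b\<in>B. c b * b) \<and> (\<forall>b\<in>B. c b \<in> \<rat>)) \<longleftrightarrow>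
        (\<exists>u. x = (\<Sum>b\<in>B. rat_scale (u b) b))" for x
  proof
    assume "\<exists>c. x = (\<Sum>b\<in>B. c b * b) \<and> (\<forall>b\<in>B. c b \<in> \<rat>)"
    then obtain c where c: "x = (\<Sum>b\<in>B. c b * b)" "\<forall>b\<in>B. of_rat (inv of_rat (c b)) = c b"
      by (metis Rats_def f_inv_into_f)
    then show "\<exists>u. x = (\<Sum>b\<in>B. rat_scale (u b) b)"
      by (intro exI[of _ "\<lambda>b. inv of_rat (c b)"]) (simp add: rat_scale_def)
  qed (auto simp: rat_scale_def)
  then show ?thesis
    using Q.span_finite[OF assms] by auto
qed

lemma mult_mem_span:
  assumes "\<forall>a\<in>A. \<forall>b\<in>B. a * b \<in> Q.span C"
    and "x \<in> Q.span A" and "y \<in> Q.span B"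
  shows "x * y \<in> Q.span C"
proof -
  have "a * y \<in> Q.span C" if "a \<in> A" for a
    using \<open>y \<in> Q.span B\<close>
  proof (induction rule: Q.span_induct_alt)
    case (step c b y')
    have "a * (rat_scale c b + y') = rat_scale c (a * b) + a * y'"
      by (simp add: rat_scale_def algebra_simps)
    then show ?case
      using step assms that by (simp add: Q.span_add Q.span_scale)
  qed (simp add: Q.span_zero)
  with \<open>x \<in> Q.span A\<close> show ?thesis
  proof (induction rule: Q.span_induct_alt)
    case (step c a x')
    have "(rat_scale c a + x') * y = rat_scale c (a * y) + x' * y"
      by (simp add: rat_scale_def algebra_simps)
    then show ?case
      using step by (simp add: Q.span_add Q.span_scale)
  qed (simp add: Q.span_zero)
qed

definition rat_subalgebra :: "complex set \<Rightarrow> bool" where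
  "rat_subalgebra L \<longleftrightarrow> Q.subspace L \<and> 1 \<in> L \<and> (\<forall>a\<in>L. \<forall>b\<in>L. a * b \<in> L)"

lemma rat_subalgebra_Rats:
  assumes "rat_subalgebra L"
  shows "\<rat> \<subseteq> L"
proof
  fix q :: complex
  assume "q \<in> \<rat>"
  then obtain r where "q = rat_scale r 1"
    by (auto simp: rat_scale_def elim: Rats_cases)
  then show "q \<in> L"
    using assms Q.subspace_scale by (auto simp: rat_subalgebra_def)
qed

lemma rat_subalgebra_poly:
  assumes L: "rat_subalgebra L" and "x \<in> L" and "\<forall>i. coeff p i \<in> \<rat>"
  shows "poly p x \<in> L"
  using assms(3)
proof (induction p rule: pCons_induct)
  case 0
  show ?case
    using L Q.subspace_0 by (auto simp: rat_subalgebra_def)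
next
  case (pCons a q)
  have "poly q x \<in> L"
    using pCons by (metis coeff_pCons_Suc)
  moreover have "a \<in> L"
    using pCons.prems rat_subalgebra_Rats[OF L] by (metis coeff_pCons_0 subsetD)
  ultimately show ?case
    using L \<open>x \<in> L\<close> Q.subspace_add by (auto simp: rat_subalgebra_def)
qed

lemma rat_subalgebra_inverse:
  assumes L: "rat_subalgebra L" and x: "x \<in> L" "x \<noteq> 0"
  shows "\<forall>i. coeff p i \<in> \<rat> \<Longrightarrow> p \<noteq> 0 \<Longrightarrow> poly p x = 0 \<Longrightarrow> inverse x \<in> L"
proof (induction p rule: pCons_induct)
  case (pCons a q)
  have q: "\<forall>i. coeff q i \<in> \<rat>" and a: "a \<in> \<rat>"
    using pCons.prems by (metis coeff_pCons_Suc, metis coeff_pCons_0)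
  have root: "x * poly q x = - a"
    using pCons.prems by (simp add: add_eq_0_iff)
  show ?case
  proof (cases "a = 0")
    case True
    then have "q \<noteq> 0" "poly q x = 0"
      using pCons.prems(2) root x(2) by auto
    then show ?thesis
      using pCons.IH q by blast
  next
    case False
    have "x * (- poly q x / a) = 1"
      using root False by (simp add: minus_divide_left[symmetric])
    then have "inverse x = - poly q x / a"
      by (rule inverse_unique)
    moreover have "- 1 / a \<in> L"
      using a rat_subalgebra_Rats[OF L] by auto
    ultimately show ?thesis
      using L rat_subalgebra_poly[OF L x(1) q] by (auto simp: rat_subalgebra_def)
  qed
qed simp

lemma algebraic_if_dependent_powers:
  assumes inj: "inj_on (\<lambda>i. x ^ i) {..n}" and dep: "Q.dependent ((\<lambda>i. x ^ i) ` {..n})"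
  shows "algebraic x"
proof -
  define P where "P = (\<lambda>i. x ^ i) ` {..n}"
  obtain u where u: "\<exists>v\<in>P. u v \<noteq> 0" "(\<Sum>v\<in>P. rat_scale (u v) v) = 0"
    using dep Q.dependent_finite[of P] by (auto simp: P_def)
  define p :: "complex poly" where "p = (\<Sum>i\<le>n. monom (of_rat (u (x ^ i))) i)"
  have coeff_p: "coeff p i = (if i \<le> n then of_rat (u (x ^ i)) else 0)" for i
    by (simp add: p_def coeff_sum coeff_monom)
  have "poly p x = (\<Sum>i\<le>n. rat_scale (u (x ^ i)) (x ^ i))"
    by (simp add: p_def poly_sum poly_monom rat_scale_def)
  also have "\<dots> = (\<Sum>v\<in>P. rat_scale (u v) v)"
    unfolding P_def using sum.reindex[OF inj, of "\<lambda>v. rat_scale (u v) v"] by (simp add: comp_def)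
  finally have "poly p x = 0"
    using u(2) by simp
  moreover obtain i where "i \<le> n" "u (x ^ i) \<noteq> 0"
    using u(1) by (auto simp: P_def)
  then have "p \<noteq> 0"
    using coeff_p[of i] by (metis coeff_0 of_rat_eq_0_iff)
  moreover have "\<forall>i. coeff p i \<in> \<rat>"
    by (simp add: coeff_p)
  ultimately show ?thesis
    unfolding algebraic_altdef by blast
qed

lemma rat_subalgebra_algebraic:
  assumes L: "rat_subalgebra L" and C: "finite C" "L \<subseteq> Q.span C" and x: "x \<in> L"
  shows "algebraic x"
proof (cases "inj_on (\<lambda>i. x ^ i) {..card C}")
  case False
  then obtain i j where ij: "i \<noteq> j" "x ^ i = x ^ j"
    unfolding inj_on_def by auto
  define p :: "complex poly" where "p = monom 1 i - monom 1 j"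
  have "coeff p i = 1"
    using ij by (simp add: p_def)
  then have "p \<noteq> 0"
    by auto
  then show ?thesis
    using ij unfolding algebraic_altdef by (intro exI[of _ p]) (auto simp: p_def poly_monom)
next
  case True
  have "x ^ i \<in> L" for i
    using L x by (induction i) (auto simp: rat_subalgebra_def)
  then have "(\<lambda>i. x ^ i) ` {..card C} \<subseteq> Q.span C"
    using C by auto
  moreover have "card ((\<lambda>i. x ^ i) ` {..card C}) = Suc (card C)"
    using True by (simp add: card_image)
  ultimately have "Q.dependent ((\<lambda>i. x ^ i) ` {..card C})"
    using Q.independent_span_bound[OF C(1)] by fastforce
  with True show ?thesis
    by (rule algebraic_if_dependent_powers)
qed

lemma number_field_subset_Qbar: "number_field K \<Longrightarrow> K \<subseteq> Qbar"
  by (simp add: number_field_def)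

lemma Rats_subset_number_field: "number_field K \<Longrightarrow> \<rat> \<subseteq> K"
  by (simp add: number_field_def)

lemma number_field_add: "number_field K \<Longrightarrow> x \<in> K \<Longrightarrow> y \<in> K \<Longrightarrow> x + y \<in> K"
  by (simp add: number_field_def)

lemma number_field_mult: "number_field K \<Longrightarrow> x \<in> K \<Longrightarrow> y \<in> K \<Longrightarrow> x * y \<in> K"
  by (simp add: number_field_def)

lemma number_field_span:
  assumes "number_field K"
  obtains B where "finite B" "B \<subseteq> K" "K \<subseteq> Q.span B"
proof -
  obtain B where B: "finite B" "B \<subseteq> K" "K \<subseteq> {\<Sum>b\<in>B. c b * b | c. \<forall>b\<in>B. c b \<in> \<rat>}"
    using assms unfolding number_field_def by blast
  then show thesis
    using that rat_combinations_eq_span[OF B(1)] by simp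
qed

lemma number_fieldI:
  assumes L: "rat_subalgebra L" and C: "finite C" "C \<subseteq> L" "L \<subseteq> Q.span C"
  shows "number_field L"
proof -
  have algebraic: "algebraic x" if "x \<in> L" for x
    using rat_subalgebra_algebraic[OF L C(1,3) that] .
  then have "L \<subseteq> Qbar"
    by (auto simp: Qbar_def)
  moreover have "\<forall>x\<in>L. x \<noteq> 0 \<longrightarrow> inverse x \<in> L"
  proof (intro ballI impI)
    fix x
    assume x: "x \<in> L" "x \<noteq> 0"
    then obtain p where "\<forall>i. coeff p i \<in> \<rat>" "p \<noteq> 0" "poly p x = 0"
      using algebraic algebraic_altdef by blast
    then show "inverse x \<in> L"
      by (rule rat_subalgebra_inverse[OF L x])
  qed
  moreover have "\<forall>x\<in>L. \<forall>y\<in>L. x + y \<in> L \<and> x - y \<in> L \<and> x * y \<in> L"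
    using L Q.subspace_add Q.subspace_diff by (simp add: rat_subalgebra_def)
  moreover have "L \<subseteq> {\<Sum>b\<in>C. c b * b | c. \<forall>b\<in>C. c b \<in> \<rat>}"
    using C(3) rat_combinations_eq_span[OF C(1)] by simp
  ultimately show ?thesis
    unfolding number_field_def using rat_subalgebra_Rats[OF L] C(1,2) by blast
qed

lemma number_field_Rats: "number_field \<rat>"
proof -
  have span: "Q.span {1} = \<rat>"
    by (auto simp: Q.span_singleton rat_scale_def Rats_def)
  then have "rat_subalgebra \<rat>"
    unfolding rat_subalgebra_def by (metis Q.subspace_span Rats_1 Rats_mult)
  then show ?thesis
    using number_fieldI[of \<rat> "{1}"] span by simp
qed

lemma number_field_compositum:
  assumes K1: "number_field K1" and K2: "number_field K2"
  obtains L where "number_field L" "K1 \<subseteq> L" "K2 \<subseteq> L"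
proof -
  obtain B1 where B1: "finite B1" "B1 \<subseteq> K1" "K1 \<subseteq> Q.span B1"
    using K1 by (rule number_field_span)
  obtain B2 where B2: "finite B2" "B2 \<subseteq> K2" "K2 \<subseteq> Q.span B2"
    using K2 by (rule number_field_span)
  define C where "C = (\<lambda>(a, b). a * b) ` (B1 \<times> B2)"
  define L where "L = Q.span C"
  have "\<forall>a\<in>B1. \<forall>b\<in>B2. a * b \<in> Q.span C"
    unfolding C_def by (intro ballI Q.span_base pair_imageI) simp
  then have K12: "a * b \<in> L" if "a \<in> K1" "b \<in> K2" for a b
    unfolding L_def by (rule mult_mem_span) (use that B1(3) B2(3) in auto)
  have "1 \<in> K1" "1 \<in> K2"
    using K1 K2 Rats_subset_number_field Rats_1 by blast+
  then have "K1 \<subseteq> L" "K2 \<subseteq> L"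
    using K12[of _ 1] K12[of 1] by auto
  have "\<forall>c1\<in>C. \<forall>c2\<in>C. c1 * c2 \<in> Q.span C"
  proof (intro ballI)
    fix c1 c2
    assume "c1 \<in> C" "c2 \<in> C"
    then obtain a1 b1 a2 b2 where c: "c1 = a1 * b1" "c2 = a2 * b2"
      and "a1 \<in> B1" "a2 \<in> B1" "b1 \<in> B2" "b2 \<in> B2"
      by (auto simp: C_def)
    then have "a1 * a2 \<in> K1" "b1 * b2 \<in> K2"
      using B1(2) B2(2) K1 K2 number_field_mult by blast+
    moreover have "c1 * c2 = (a1 * a2) * (b1 * b2)"
      using c by (simp add: mult_ac)
    ultimately show "c1 * c2 \<in> Q.span C"
      using K12 by (simp add: L_def)
  qed
  then have "a * b \<in> L" if "a \<in> L" "b \<in> L" for a b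
    unfolding L_def by (rule mult_mem_span) (use that in \<open>simp_all add: L_def\<close>)
  then have "rat_subalgebra L"
    using \<open>K1 \<subseteq> L\<close> \<open>1 \<in> K1\<close> unfolding rat_subalgebra_def L_def by blast
  moreover have "finite C" "C \<subseteq> L"
    using B1 B2 by (auto simp: C_def L_def intro: Q.span_base)
  ultimately show ?thesis
    using that number_fieldI[of L C] \<open>K1 \<subseteq> L\<close> \<open>K2 \<subseteq> L\<close> by (simp add: L_def)
qed

lemma number_field_Union:
  assumes "finite F" "\<forall>K\<in>F. number_field K"
  obtains L where "number_field L" "\<forall>K\<in>F. K \<subseteq> L"
  using assms
proof (induction F arbitrary: thesis rule: finite_induct)
  case empty
  then show ?case
    using number_field_Rats by blast
next
  case (insert K F)
  obtain L where "number_field L" "\<forall>K\<in>F. K \<subseteq> L"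
    using insert by blast
  moreover obtain L' where "number_field L'" "K \<subseteq> L'" "L \<subseteq> L'"
    using number_field_compositum insert.prems(2) \<open>number_field L\<close> by blast
  ultimately show ?case
    using insert.prems(1) by blast
qed

section \<open>Places and divisibility\<close>

lemma place_absval: "v \<in> places A \<Longrightarrow> \<phi> \<in> v \<Longrightarrow> absval A \<phi>"
  by (auto simp: places_def abs_class_def)

lemma mem_place_iff:
  assumes "v \<in> places A" "\<phi> \<in> v"
  shows "\<psi> \<in> v \<longleftrightarrow> absval A \<psi> \<and> (\<exists>c>0. \<forall>x\<in>A. \<psi> x = \<phi> x powr c)"
proof -
  obtain \<rho> where v: "v = abs_class A \<rho>"
    using assms(1) by (auto simp: places_def)
  then obtain d where d: "d > 0" "\<forall>x\<in>A. \<phi> x = \<rho> x powr d"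
    using assms(2) by (auto simp: abs_class_def)
  have "(\<exists>e>0. \<forall>x\<in>A. \<psi> x = \<rho> x powr e) \<longleftrightarrow> (\<exists>c>0. \<forall>x\<in>A. \<psi> x = \<phi> x powr c)"
  proof
    assume "\<exists>e>0. \<forall>x\<in>A. \<psi> x = \<rho> x powr e"
    then obtain e where "e > 0" "\<forall>x\<in>A. \<psi> x = \<rho> x powr e"
      by blast
    then show "\<exists>c>0. \<forall>x\<in>A. \<psi> x = \<phi> x powr c"
      using d by (intro exI[of _ "e / d"]) (simp add: powr_powr)
  next
    assume "\<exists>c>0. \<forall>x\<in>A. \<psi> x = \<phi> x powr c"
    then obtain c where "c > 0" "\<forall>x\<in>A. \<psi> x = \<phi> x powr c"
      by blast
    then show "\<exists>e>0. \<forall>x\<in>A. \<psi> x = \<rho> x powr e"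
      using d by (intro exI[of _ "d * c"]) (simp add: powr_powr)
  qed
  then show ?thesis
    by (simp add: v abs_class_def)
qed

lemma places_disjoint:
  assumes "v \<in> places A" "w \<in> places A" "\<phi> \<in> v" "\<phi> \<in> w"
  shows "v = w"
  using mem_place_iff[OF assms(1,3)] mem_place_iff[OF assms(2,4)] by blast

lemma abs_class_self: "absval A \<phi> \<Longrightarrow> \<phi> \<in> abs_class A \<phi>"
  by (auto simp: abs_class_def absval_def intro!: exI[of _ 1])

lemma place_nontrivial:
  assumes "v \<in> places A" "\<phi> \<in> v"
  obtains x where "x \<in> A" "x \<noteq> 0" "\<phi> x \<noteq> 1"
proof -
  obtain \<rho> where \<rho>: "v = abs_class A \<rho>" "nontrivial_absval A \<rho>"
    using assms(1) by (auto simp: places_def)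
  then obtain x where x: "x \<in> A" "x \<noteq> 0" "\<rho> x \<noteq> 1"
    by (auto simp: nontrivial_absval_def)
  have "\<rho> x > 0"
    using \<rho>(2) x by (auto simp: nontrivial_absval_def absval_def less_le)
  obtain c where "c > 0" "\<phi> x = \<rho> x powr c"
    using assms(2) x(1) by (auto simp: \<rho>(1) abs_class_def)
  then have "\<phi> x \<noteq> 1"
    using \<open>\<rho> x > 0\<close> x(3) by simp
  with x(1,2) show thesis
    by (rule that)
qed

lemma absval_restr:
  assumes "absval A \<phi>" "B \<subseteq> A"
    and "\<And>x y. x \<in> B \<Longrightarrow> y \<in> B \<Longrightarrow> x + y \<in> B" "\<And>x y. x \<in> B \<Longrightarrow> y \<in> B \<Longrightarrow> x * y \<in> B"
  shows "absval B (restr B \<phi>)"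
  using assms unfolding absval_def restr_def by (auto simp: subset_iff)

lemma restr_restr: "K \<subseteq> L \<Longrightarrow> restr K (restr L \<phi>) = restr K \<phi>"
  by (auto simp: restr_def fun_eq_iff)

lemma absval_restr_number_field:
  "absval A \<phi> \<Longrightarrow> number_field K \<Longrightarrow> K \<subseteq> A \<Longrightarrow> absval K (restr K \<phi>)"
  using absval_restr number_field_add number_field_mult by metis

lemma place_divides_restr:
  assumes K: "number_field K" "K \<subseteq> A" and w: "w \<in> places A" and v: "v \<in> places K"
    and "place_divides K w v" "\<phi> \<in> w"
  shows "restr K \<phi> \<in> v"
proof -
  obtain \<phi>\<^sub>0 where \<phi>\<^sub>0: "\<phi>\<^sub>0 \<in> w" "restr K \<phi>\<^sub>0 \<in> v"
    using assms(5) by (auto simp: place_divides_def)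
  obtain c where "c > 0" "\<forall>x\<in>A. \<phi> x = \<phi>\<^sub>0 x powr c"
    using mem_place_iff[OF w \<phi>\<^sub>0(1)] \<open>\<phi> \<in> w\<close> by blast
  then have "\<forall>x\<in>K. restr K \<phi> x = restr K \<phi>\<^sub>0 x powr c"
    using K(2) by (auto simp: restr_def)
  moreover have "absval K (restr K \<phi>)"
    using absval_restr_number_field place_absval[OF w \<open>\<phi> \<in> w\<close>] K by blast
  ultimately show ?thesis
    using mem_place_iff[OF v \<phi>\<^sub>0(2)] \<open>c > 0\<close> by blast
qed

lemma place_divides_unique:
  assumes "number_field K" "K \<subseteq> A" "w \<in> places A" "v \<in> places K" "v' \<in> places K"
    and "place_divides K w v" "place_divides K w v'"
  shows "v = v'"
proof -
  obtain \<phi> where "\<phi> \<in> w" "restr K \<phi> \<in> v"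
    using assms(6) by (auto simp: place_divides_def)
  moreover have "restr K \<phi> \<in> v'"
    using place_divides_restr[OF assms(1-3,5,7) \<open>\<phi> \<in> w\<close>] .
  ultimately show ?thesis
    using places_disjoint assms(4,5) by blast
qed

lemma place_divides_trans:
  assumes "number_field K" "K \<subseteq> L" "w \<in> places L" "v \<in> places K"
    and "place_divides L z w" "place_divides K w v"
  shows "place_divides K z v"
proof -
  obtain \<phi> where "\<phi> \<in> z" "restr L \<phi> \<in> w"
    using assms(5) by (auto simp: place_divides_def)
  moreover have "restr K (restr L \<phi>) \<in> v"
    using place_divides_restr[OF assms(1-4,6) \<open>restr L \<phi> \<in> w\<close>] .
  ultimately show ?thesis
    using restr_restr[OF assms(2)] by (auto simp: place_divides_def)
qed

lemma place_divides_intermediate: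
  assumes "number_field K" "K \<subseteq> L" "L \<subseteq> A" "y \<in> places A" "v \<in> places K"
    and "place_divides L y w" "place_divides K y v"
  shows "place_divides K w v"
proof -
  obtain \<phi> where "\<phi> \<in> y" "restr L \<phi> \<in> w"
    using assms(6) by (auto simp: place_divides_def)
  moreover have "restr K \<phi> \<in> v"
    using place_divides_restr[OF assms(1) _ assms(4,5,7) \<open>\<phi> \<in> y\<close>] assms(2,3) by blast
  ultimately show ?thesis
    using restr_restr[OF assms(2)] by (metis place_divides_def)
qed

lemma place_divides_lift:
  assumes "number_field K" "number_field L" "K \<subseteq> L" "L \<subseteq> A" "y \<in> places A" "v \<in> places K"
    and "place_divides K y v"
  obtains w where "w \<in> places L" "place_divides L y w"
proof -
  obtain \<phi> where \<phi>: "\<phi> \<in> y" "restr K \<phi> \<in> v"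
    using assms(7) by (auto simp: place_divides_def)
  obtain x where "x \<in> K" "x \<noteq> 0" "restr K \<phi> x \<noteq> 1"
    using place_nontrivial[OF assms(6) \<phi>(2)] .
  then have "x \<in> L" "x \<noteq> 0" "restr L \<phi> x \<noteq> 1"
    using assms(3) by (auto simp: restr_def)
  moreover have "absval L (restr L \<phi>)"
    using absval_restr_number_field[OF place_absval[OF assms(5) \<phi>(1)] assms(2,4)] .
  ultimately have "abs_class L (restr L \<phi>) \<in> places L"
    by (auto simp: places_def nontrivial_absval_def)
  moreover have "place_divides L y (abs_class L (restr L \<phi>))"
    using abs_class_self[OF \<open>absval L (restr L \<phi>)\<close>] \<phi>(1) by (auto simp: place_divides_def)
  ultimately show thesis
    by (rule that)
qed

section \<open>The basic open sets \<open>Y(K,v)\<close>\<close>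

lemma YKv_subset_YKv:
  assumes K: "number_field K" and L: "number_field L" "K \<subseteq> L"
    and w: "w \<in> places L" and v: "v \<in> places K"
    and y: "y \<in> YKv L w" "y \<in> YKv K v"
  shows "YKv L w \<subseteq> YKv K v"
proof -
  have "place_divides K w v"
    using place_divides_intermediate[OF K L(2) number_field_subset_Qbar[OF L(1)] _ v] y
    by (auto simp: YKv_def)
  then show ?thesis
    using place_divides_trans[OF K L(2) w v] by (auto simp: YKv_def)
qed

lemma YKv_disjoint:
  assumes "number_field K" "v \<in> places K" "v' \<in> places K" "y \<in> YKv K v" "y \<in> YKv K v'"
  shows "v = v'"
  using assms place_divides_unique[OF assms(1) number_field_subset_Qbar[OF assms(1)]]
  by (auto simp: YKv_def)

lemma YKv_lift:
  assumes "number_field K" "number_field L" "K \<subseteq> L" "v \<in> places K" "y \<in> YKv K v"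
  obtains w where "w \<in> places L" "y \<in> YKv L w"
proof -
  have "y \<in> Y" "place_divides K y v"
    using assms(5) by (auto simp: YKv_def)
  then obtain w where "w \<in> places L" "place_divides L y w"
    using place_divides_lift[OF assms(1-3) number_field_subset_Qbar[OF assms(2)]] assms(4) by blast
  then show thesis
    using that \<open>y \<in> Y\<close> by (auto simp: YKv_def)
qed

lemma YKv_subset_Xover:
  assumes "number_field K" "S \<subseteq> places \<rat>" "v \<in> MK K S"
  shows "YKv K v \<subseteq> Xover S"
  using assms place_divides_trans[OF number_field_Rats Rats_subset_number_field[OF assms(1)]]
  by (fastforce simp: YKv_def Xover_def MK_def)

lemma Xover_subset_UN_YKv:
  assumes K: "number_field K" and S: "S \<subseteq> places \<rat>"
  shows "Xover S \<subseteq> (\<Union>v\<in>MK K S. YKv K v)"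
proof
  fix y
  assume "y \<in> Xover S"
  then obtain s where s: "s \<in> S" "y \<in> YKv \<rat> s"
    by (auto simp: Xover_def YKv_def)
  have "s \<in> places \<rat>"
    using S s(1) by blast
  obtain v where v: "v \<in> places K" "y \<in> YKv K v"
    using YKv_lift[OF number_field_Rats K Rats_subset_number_field[OF K] \<open>s \<in> places \<rat>\<close> s(2)] .
  have "place_divides \<rat> v s"
    using place_divides_intermediate[OF number_field_Rats Rats_subset_number_field[OF K]
        number_field_subset_Qbar[OF K] _ \<open>s \<in> places \<rat>\<close>] v s by (auto simp: YKv_def)
  then show "y \<in> (\<Union>v\<in>MK K S. YKv K v)"
    using v s(1) by (auto simp: MK_def)
qed

lemma openin_Ytop_YKv: "number_field K \<Longrightarrow> v \<in> places K \<Longrightarrow> openin Ytop (YKv K v)"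
  unfolding Ytop_def openin_topology_generated_by_iff
  by (rule generate_topology_on.Basis) blast

lemma Xover_subset_topspace:
  assumes "S \<subseteq> places \<rat>"
  shows "Xover S \<subseteq> topspace Ytop"
proof
  fix y
  assume "y \<in> Xover S"
  then obtain v where "v \<in> MK \<rat> S" "y \<in> YKv \<rat> v"
    using Xover_subset_UN_YKv[OF number_field_Rats assms] by blast
  then show "y \<in> topspace Ytop"
    using openin_subset[OF openin_Ytop_YKv[OF number_field_Rats]] by (auto simp: MK_def)
qed

lemma openin_Ytop_YKv_nbhd:
  assumes "openin Ytop U" "y \<in> U"
  obtains K v where "number_field K" "v \<in> places K" "y \<in> YKv K v" "YKv K v \<subseteq> U"
proof -
  have "generate_topology_on {YKv K v | K v. number_field K \<and> v \<in> places K} U"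
    using assms(1) by (simp add: Ytop_def openin_topology_generated_by_iff)
  then have "\<exists>K v. number_field K \<and> v \<in> places K \<and> y \<in> YKv K v \<and> YKv K v \<subseteq> U"
    using assms(2)
  proof (induction arbitrary: y rule: generate_topology_on.induct)
    case (Int U\<^sub>1 U\<^sub>2)
    then obtain K\<^sub>1 v\<^sub>1 K\<^sub>2 v\<^sub>2 where
      1: "number_field K\<^sub>1" "v\<^sub>1 \<in> places K\<^sub>1" "y \<in> YKv K\<^sub>1 v\<^sub>1" "YKv K\<^sub>1 v\<^sub>1 \<subseteq> U\<^sub>1" and
      2: "number_field K\<^sub>2" "v\<^sub>2 \<in> places K\<^sub>2" "y \<in> YKv K\<^sub>2 v\<^sub>2" "YKv K\<^sub>2 v\<^sub>2 \<subseteq> U\<^sub>2"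
      by blast
    obtain L where L: "number_field L" "K\<^sub>1 \<subseteq> L" "K\<^sub>2 \<subseteq> L"
      using number_field_compositum[OF 1(1) 2(1)] .
    obtain w where w: "w \<in> places L" "y \<in> YKv L w"
      using YKv_lift[OF 1(1) L(1,2) 1(2,3)] .
    have "YKv L w \<subseteq> U\<^sub>1 \<inter> U\<^sub>2"
      using YKv_subset_YKv[OF 1(1) L(1,2) w(1) 1(2) w(2) 1(3)]
        YKv_subset_YKv[OF 2(1) L(1,3) w(1) 2(2) w(2) 2(3)] 1(4) 2(4) by blast
    then show ?case
      using L(1) w by blast
  qed blast+
  then show thesis
    using that by blast
qed

section \<open>Compactness and locally constant functions\<close>

lemma compactin_finite_subcover:
  assumes "compactin X C" "\<And>i. i \<in> I \<Longrightarrow> openin X (U i)" "C \<subseteq> (\<Union>i\<in>I. U i)"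
  obtains J where "finite J" "J \<subseteq> I" "C \<subseteq> (\<Union>i\<in>J. U i)"
proof -
  obtain \<F> where "finite \<F>" "\<F> \<subseteq> U ` I" "C \<subseteq> \<Union>\<F>"
    using compactinD[OF assms(1), of "U ` I"] assms(2,3) by blast
  then show thesis
    using that by (metis finite_subset_image)
qed

lemma compactin_disjoint_open_cover_finite:
  assumes "compactin X C" "\<And>i. i \<in> I \<Longrightarrow> openin X (U i)" "disjoint_family_on U I"
    and "C \<subseteq> (\<Union>i\<in>I. U i)"
  shows "finite {i \<in> I. U i \<inter> C \<noteq> {}}"
proof -
  obtain J where J: "finite J" "J \<subseteq> I" "C \<subseteq> (\<Union>i\<in>J. U i)"
    using compactin_finite_subcover[OF assms(1,2,4)] .
  have "{i \<in> I. U i \<inter> C \<noteq> {}} \<subseteq> J"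
    using J(2,3) assms(3) by (fastforce simp: disjoint_family_on_def)
  then show ?thesis
    using J(1) finite_subset by blast
qed

lemma LCc_constant_on_YKv:
  assumes "f \<in> LCc X" "x \<in> X"
  obtains K v where "number_field K" "v \<in> places K" "x \<in> YKv K v"
    "\<And>y. y \<in> YKv K v \<inter> X \<Longrightarrow> f y = f x"
proof -
  obtain U where U: "openin (subtopology Ytop X) U" "x \<in> U" "\<forall>y\<in>U. f y = f x"
    using assms by (auto simp: LCc_def)
  then obtain U' where "openin Ytop U'" "U = U' \<inter> X"
    by (auto simp: openin_subtopology)
  moreover obtain K v where "number_field K" "v \<in> places K" "x \<in> YKv K v" "YKv K v \<subseteq> U'"
    using openin_Ytop_YKv_nbhd \<open>openin Ytop U'\<close> U(2) calculation(2) by blast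
  ultimately show thesis
    using that U(3) by blast
qed

lemma LCc_finite_YKv_cover:
  assumes "f \<in> LCc X"
  obtains \<V> where "finite \<V>"
    "\<And>K v. (K, v) \<in> \<V> \<Longrightarrow> number_field K \<and> v \<in> places K \<and>
       (\<forall>y\<in>YKv K v \<inter> X. \<forall>y'\<in>YKv K v \<inter> X. f y = f y')"
    "subtopology Ytop X closure_of {x \<in> X. f x \<noteq> 0} \<subseteq> (\<Union>(K, v)\<in>\<V>. YKv K v)"
proof -
  define Cl where "Cl = subtopology Ytop X closure_of {x \<in> X. f x \<noteq> 0}"
  have "Cl \<subseteq> X"
    unfolding Cl_def by (rule closure_of_subset_subtopology)
  then have "\<forall>x\<in>Cl. \<exists>K v. number_field K \<and> v \<in> places K \<and> x \<in> YKv K v \<and>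
                            (\<forall>y\<in>YKv K v \<inter> X. f y = f x)"
    using LCc_constant_on_YKv[OF assms(1)] by (metis subsetD)
  then obtain K\<^sub>x v\<^sub>x where x: "\<And>x. x \<in> Cl \<Longrightarrow> number_field (K\<^sub>x x) \<and> v\<^sub>x x \<in> places (K\<^sub>x x) \<and>
      x \<in> YKv (K\<^sub>x x) (v\<^sub>x x) \<and> (\<forall>y\<in>YKv (K\<^sub>x x) (v\<^sub>x x) \<inter> X. f y = f x)"
    by metis
  have "compactin (subtopology Ytop X) Cl"
    using assms(1) by (simp add: LCc_def Cl_def)
  moreover have "openin (subtopology Ytop X) (YKv (K\<^sub>x x) (v\<^sub>x x) \<inter> X)" if "x \<in> Cl" for x
    using x[OF that] openin_Ytop_YKv by (auto simp: openin_subtopology)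
  moreover have "Cl \<subseteq> (\<Union>x\<in>Cl. YKv (K\<^sub>x x) (v\<^sub>x x) \<inter> X)"
    using x \<open>Cl \<subseteq> X\<close> by auto
  ultimately obtain P where P: "finite P" "P \<subseteq> Cl" "Cl \<subseteq> (\<Union>x\<in>P. YKv (K\<^sub>x x) (v\<^sub>x x) \<inter> X)"
    by (rule compactin_finite_subcover)
  show thesis
  proof (rule that[of "(\<lambda>x. (K\<^sub>x x, v\<^sub>x x)) ` P"])
    show "finite ((\<lambda>x. (K\<^sub>x x, v\<^sub>x x)) ` P)"
      using P(1) by simp
    show "number_field K \<and> v \<in> places K \<and> (\<forall>y\<in>YKv K v \<inter> X. \<forall>y'\<in>YKv K v \<inter> X. f y = f y')"
      if "(K, v) \<in> (\<lambda>x. (K\<^sub>x x, v\<^sub>x x)) ` P" for K v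
      using that x P(2) by force
    show "subtopology Ytop X closure_of {x \<in> X. f x \<noteq> 0} \<subseteq> (\<Union>(K, v)\<in>(\<lambda>x. (K\<^sub>x x, v\<^sub>x x)) ` P. YKv K v)"
      using P(3) unfolding Cl_def by auto
  qed
qed

lemma LCc_constant_on_YKv_uniform:
  assumes "f \<in> LCc X"
  defines "Cl \<equiv> subtopology Ytop X closure_of {x \<in> X. f x \<noteq> 0}"
  obtains K where "number_field K"
    "\<And>v z y. v \<in> places K \<Longrightarrow> z \<in> YKv K v \<inter> Cl \<Longrightarrow> y \<in> YKv K v \<inter> X \<Longrightarrow> f y = f z"
proof -
  obtain \<V> where \<V>: "finite \<V>"
    "\<And>K v. (K, v) \<in> \<V> \<Longrightarrow> number_field K \<and> v \<in> places K \<and>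
       (\<forall>y\<in>YKv K v \<inter> X. \<forall>y'\<in>YKv K v \<inter> X. f y = f y')"
    "Cl \<subseteq> (\<Union>(K, v)\<in>\<V>. YKv K v)"
    using LCc_finite_YKv_cover[OF assms(1)] unfolding Cl_def by blast
  have "finite (fst ` \<V>)" "\<forall>K\<in>fst ` \<V>. number_field K"
    using \<V>(1,2) by auto
  then obtain K where K: "number_field K" "\<forall>K'\<in>fst ` \<V>. K' \<subseteq> K"
    by (rule number_field_Union)
  have "Cl \<subseteq> X"
    unfolding Cl_def by (rule closure_of_subset_subtopology)
  have "f y = f z" if v: "v \<in> places K" and z: "z \<in> YKv K v \<inter> Cl" and y: "y \<in> YKv K v \<inter> X"
    for v z y
  proof -
    obtain K' v' where Kv': "(K', v') \<in> \<V>" "z \<in> YKv K' v'"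
      using \<V>(3) z by blast
    then have K': "number_field K'" "v' \<in> places K'" "K' \<subseteq> K"
      using \<V>(2) K(2) by force+
    have "YKv K v \<subseteq> YKv K' v'"
      using YKv_subset_YKv[OF K'(1) K(1) K'(3) v K'(2)] Kv'(2) z by blast
    then show ?thesis
      using \<V>(2)[OF Kv'(1)] y z \<open>Cl \<subseteq> X\<close> by blast
  qed
  with K(1) show thesis
    by (rule that)
qed

lemma finite_MK_meeting_compactin:
  assumes K: "number_field K" and S: "S \<subseteq> places \<rat>"
    and C: "compactin (subtopology Ytop (Xover S)) C"
  shows "finite {v \<in> MK K S. YKv K v \<inter> C \<noteq> {}}"
proof -
  have "C \<subseteq> Xover S"
    using compactin_subset_topspace[OF C] by simp
  have "finite {v \<in> MK K S. YKv K v \<inter> Xover S \<inter> C \<noteq> {}}"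
  proof (rule compactin_disjoint_open_cover_finite[OF C])
    show "openin (subtopology Ytop (Xover S)) (YKv K v \<inter> Xover S)" if "v \<in> MK K S" for v
      using that openin_Ytop_YKv[OF K] by (auto simp: openin_subtopology MK_def)
    show "disjoint_family_on (\<lambda>v. YKv K v \<inter> Xover S) (MK K S)"
      unfolding disjoint_family_on_def
    proof (intro ballI impI)
      fix v v'
      assume "v \<in> MK K S" "v' \<in> MK K S" "v \<noteq> v'"
      then have "v \<in> places K" "v' \<in> places K"
        by (auto simp: MK_def)
      with \<open>v \<noteq> v'\<close> show "(YKv K v \<inter> Xover S) \<inter> (YKv K v' \<inter> Xover S) = {}"
        using YKv_disjoint[OF K] by blast
    qed
    show "C \<subseteq> (\<Union>v\<in>MK K S. YKv K v \<inter> Xover S)"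
      using \<open>C \<subseteq> Xover S\<close> Xover_subset_UN_YKv[OF K S] by blast
  qed
  moreover have "YKv K v \<inter> Xover S \<inter> C = YKv K v \<inter> C" for v
    using \<open>C \<subseteq> Xover S\<close> by blast
  ultimately show ?thesis
    by simp
qed

theorem proposition1p1:
  fixes S :: "(complex \<Rightarrow> real) set set" and f :: "(complex \<Rightarrow> real) set \<Rightarrow> real"
  assumes "S \<subseteq> places \<rat>"
    and "f \<in> LCc (Xover S)"
  shows "\<exists>K. number_field K \<and>
           (\<forall>v\<in>MK K S. \<exists>c. \<forall>y\<in>YKv K v. f y = c) \<and>
           finite {v \<in> MK K S. \<exists>y\<in>YKv K v. f y \<noteq> 0}"
proof -
  define X where "X = Xover S"
  define Cl where "Cl = subtopology Ytop X closure_of {x \<in> X. f x \<noteq> 0}"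
  obtain K where K: "number_field K"
    and const: "\<And>v z y. v \<in> places K \<Longrightarrow> z \<in> YKv K v \<inter> Cl \<Longrightarrow> y \<in> YKv K v \<inter> X \<Longrightarrow> f y = f z"
    using LCc_constant_on_YKv_uniform assms(2) unfolding X_def Cl_def by blast
  have YKv_X: "YKv K v \<subseteq> X" if "v \<in> MK K S" for v
    using YKv_subset_Xover[OF K assms(1) that] by (simp add: X_def)
  have supp: "{x \<in> X. f x \<noteq> 0} \<subseteq> Cl"
    unfolding Cl_def using Xover_subset_topspace[OF assms(1)]
    by (intro closure_of_subset) (auto simp: X_def)
  have "\<exists>c. \<forall>y\<in>YKv K v. f y = c" if v: "v \<in> MK K S" for v
  proof (cases "\<exists>z\<in>YKv K v. f z \<noteq> 0")
    case True
    then obtain z where "z \<in> YKv K v \<inter> Cl"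
      using supp YKv_X[OF v] by blast
    then show ?thesis
      using const[of v] v YKv_X[OF v] by (auto simp: MK_def)
  qed auto
  moreover have "finite {v \<in> MK K S. YKv K v \<inter> Cl \<noteq> {}}"
    using finite_MK_meeting_compactin[OF K assms(1)] assms(2) by (simp add: LCc_def Cl_def X_def)
  then have "finite {v \<in> MK K S. \<exists>y\<in>YKv K v. f y \<noteq> 0}"
    by (rule finite_subset[rotated]) (use supp YKv_X in blast)
  ultimately show ?thesis
    using K by blast
qed

end
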